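(* Let $f(u)=e^{g(u)}$ where $g\in C^3[0,\infty)$ satisfies $g'>0$, $g''>0$, $g'^2-g''\ge0$, $2g''^2-g'g'''>0$ on $[0,\infty)$. Let $v(r)=F^{-1}\big[\frac{r^2}{16}e^{-x(t)}\big]$, $t=-\log r$, for $0<r\le R$, with $x$, $t_0$, $R$ as in the context. Then $f'(v(r))\le\frac{16}{r^2}$ for $0<r\le R$.
   Context: Let $F(u)=\int_u^\infty\frac{ds}{f(s)}$, $\eta(y)=F^{-1}(e^{-y})$ and $h(y)=1-f'(\eta(y))F(\eta(y))$ for $y\ge-\log F(0)$. Under the hypotheses, $h(y)\to0$ as $y\to\infty$ and $h'<0$, and there exist $t_0\in\mathbb{R}$ and a $C^2$ function $x:[t_0,\infty)\to\mathbb{R}$ such that $4(e^{x(t)}-1)=h(x(t)+2t+\log16)$ for all $t\ge t_0$, $x(t_0)+2t_0+\log16=-\log F(0)$, $|x(t)|\le1$ for all large $t$, and $\xi(t):=x(t)+2t+\log16$ is strictly increasing; for each $t$ the value $x(t)$ is the unique solution of the implicit equation with $x+2t+\log 16\ge -\log F(0)$. Set $R=e^{-t_0}$; then $v=\eta(\xi(t))$ is defined on $(0,R]$ with $v(R)=0$. *)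

theory Defs
  imports "HOL-Analysis.Analysis"
begin

definition Fint :: "(real \<Rightarrow> real) \<Rightarrow> real \<Rightarrow> real" where
  "Fint g u = integral {u..} (\<lambda>s. 1 / exp (g s))"

definition Finv :: "(real \<Rightarrow> real) \<Rightarrow> real \<Rightarrow> real" where
  "Finv g = the_inv_into {0..} (Fint g)"

definition eta :: "(real \<Rightarrow> real) \<Rightarrow> real \<Rightarrow> real" where
  "eta g y = Finv g (exp (- y))"

text \<open>h(y) = 1 - f'(eta y) F(eta y), where f' = g' e^g (g1 is the derivative of g).\<close>
definition hfun :: "(real \<Rightarrow> real) \<Rightarrow> (real \<Rightarrow> real) \<Rightarrow> real \<Rightarrow> real" where
  "hfun g g1 y = 1 - g1 (eta g y) * exp (g (eta g y)) * Fint g (eta g y)"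

end

theory Submission
  imports Defs "HOL-Real_Asymp.Real_Asymp"
begin

(* Since g' is increasing, 1/f(s) \<le> g'(s) / (g'(u) f(s)) for s \<ge> u, and the right-hand side
   integrates to 1/f'(u); hence f'(u) F(u) \<le> 1, i.e. h \<ge> 0. For t = -ln r put E = e^{x(t)} and
   v = \<eta>(\<xi>(t)), so that F(v) = e^{-\<xi>}. The equation 4(E - 1) = h(\<xi>) = 1 - f'(v) e^{-\<xi>} gives
   E \<ge> 1 and f'(v) = (5 - 4E) e^\<xi>, and (4E - 1)(E - 1) \<ge> 0 turns this into
   f'(v) \<le> e^\<xi> / E = 16/r^2. Only g' > 0, g'' > 0 and the properties of x at the single point t
   enter. *)

lemma mono_on_atLeast_if_deriv_nonneg:
  fixes f f' :: "real \<Rightarrow> real"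
  assumes deriv: "\<And>u. a \<le> u \<Longrightarrow> (f has_real_derivative f' u) (at u within {a..})"
    and nonneg: "\<And>u. a \<le> u \<Longrightarrow> 0 \<le> f' u"
  shows "mono_on {a..} f"
proof (rule monotone_onI)
  fix u w assume "u \<in> {a..}" "w \<in> {a..}" "u \<le> w"
  moreover obtain z where "z \<in> {u..w}" "f w - f u = f' z * (w - u)"
    using mvt_very_simple[of u w f "\<lambda>z. (*) (f' z)"] \<open>u \<le> w\<close> \<open>u \<in> {a..}\<close>
      DERIV_subset[OF deriv, of _ "{u..w}"]
    by (force simp: has_field_derivative_def)
  moreover have "0 \<le> f' z * (w - u)"
    using nonneg[of z] \<open>z \<in> {u..w}\<close> \<open>u \<in> {a..}\<close> \<open>u \<le> w\<close> by simp
  ultimately show "f u \<le> f w" by simp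
qed

locale convex_exponent =
  fixes g g1 :: "real \<Rightarrow> real"
  assumes g_deriv: "\<And>u. 0 \<le> u \<Longrightarrow> (g has_real_derivative g1 u) (at u within {0..})"
    and g1_pos: "\<And>u. 0 \<le> u \<Longrightarrow> 0 < g1 u"
    and g1_mono: "mono_on {0..} g1"
begin

lemma tangent_le:
  assumes "0 \<le> a" "a \<le> b"
  shows "g a + g1 a * (b - a) \<le> g b"
proof -
  obtain z where z: "z \<in> {a..b}" "g b - g a = g1 z * (b - a)"
    using mvt_very_simple[of a b g "\<lambda>z. (*) (g1 z)"] assms DERIV_subset[OF g_deriv, of _ "{a..b}"]
    by (force simp: has_field_derivative_def)
  have "g1 a \<le> g1 z"
    using monotone_onD[OF g1_mono] z(1) assms by auto
  then have "g1 a * (b - a) \<le> g1 z * (b - a)"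
    using assms by (intro mult_right_mono) auto
  with z(2) show ?thesis by simp
qed

lemma continuous_on_g: "continuous_on {0..} g"
  using g_deriv by (meson DERIV_continuous atLeast_iff continuous_on_eq_continuous_within)

lemma g_mono: "mono_on {0..} g"
  by (rule mono_on_atLeast_if_deriv_nonneg[OF g_deriv less_imp_le[OF g1_pos]])

lemma filterlim_g_at_top: "filterlim g at_top at_top"
proof (rule filterlim_at_top_mono[of "\<lambda>s. g 0 + g1 0 * s"])
  show "filterlim (\<lambda>s. g 0 + g1 0 * s) at_top at_top"
    using g1_pos[of 0] by real_asymp
  show "\<forall>\<^sub>F s in at_top. g 0 + g1 0 * s \<le> g s"
    using eventually_ge_at_top[of 0] by eventually_elim (use tangent_le[of 0] in simp)
qed

lemma has_integral_deriv_over_exp: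
  assumes "0 \<le> u"
  shows "((\<lambda>s. g1 s / exp (g s)) has_integral 1 / exp (g u)) {u..}"
proof (rule has_integral_to_inf)
  have ftc: "((\<lambda>s. g1 s / exp (g s)) has_integral 1 / exp (g u) - 1 / exp (g w)) {u..w}"
    if "u \<le> w" for w
  proof -
    have "((\<lambda>s. - 1 / exp (g s)) has_real_derivative g1 s / exp (g s)) (at s within {u..w})"
      if "s \<in> {u..w}" for s
      using DERIV_subset[OF g_deriv, of s "{u..w}"] that assms
      by (auto intro!: derivative_eq_intros simp: field_simps power2_eq_square)
    then have "((\<lambda>s. g1 s / exp (g s)) has_integral - 1 / exp (g w) - - 1 / exp (g u)) {u..w}"
      by (intro fundamental_theorem_of_calculus[OF \<open>u \<le> w\<close>])
        (simp add: has_real_derivative_iff_has_vector_derivative)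
    then show ?thesis by simp
  qed
  show "(\<lambda>s. g1 s / exp (g s)) integrable_on {u..w}" for w
    using ftc[of w] by (cases "u \<le> w") auto
  show "0 \<le> g1 w / exp (g w)" if "u \<le> w" for w
    using g1_pos[of w] that assms by simp
  have "\<forall>\<^sub>F w in at_top. integral {u..w} (\<lambda>s. g1 s / exp (g s)) = 1 / exp (g u) - 1 / exp (g w)"
    using eventually_ge_at_top[of u] by eventually_elim (use ftc in blast)
  moreover have "((\<lambda>w. 1 / exp (g u) - 1 / exp (g w)) \<longlongrightarrow> 1 / exp (g u) - 0) at_top"
    using filterlim_compose[OF exp_at_top filterlim_g_at_top]
    by (intro tendsto_intros tendsto_divide_0[OF tendsto_const] filterlim_at_top_imp_at_infinity)
  ultimately show "((\<lambda>w. integral {u..w} (\<lambda>s. g1 s / exp (g s))) \<longlongrightarrow> 1 / exp (g u)) at_top"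
    by (simp add: tendsto_cong)
qed

lemma integrable_inverse_exp:
  assumes "0 \<le> u"
  shows "(\<lambda>s. 1 / exp (g s)) integrable_on {u..}"
proof (rule measurable_bounded_by_integrable_imp_integrable_real)
  have "continuous_on {u..} g"
    using continuous_on_g by (rule continuous_on_subset) (use assms in auto)
  then show "(\<lambda>s. 1 / exp (g s)) \<in> borel_measurable (lebesgue_on {u..})"
    by (intro continuous_imp_measurable_on_sets_lebesgue continuous_intros) auto
  show "(\<lambda>s. g1 s / exp (g s) / g1 u) integrable_on {u..}"
    using has_integral_deriv_over_exp[OF assms] by (intro integrable_on_divide) blast
  show "\<bar>1 / exp (g s)\<bar> \<le> g1 s / exp (g s) / g1 u" if "s \<in> {u..}" for s
    using monotone_onD[OF g1_mono, of u s] g1_pos[of u] that assms by (simp add: field_simps)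
qed auto

lemma Fint_le_inverse_deriv:
  assumes "0 \<le> u"
  shows "Fint g u \<le> 1 / (g1 u * exp (g u))"
proof -
  have "Fint g u \<le> 1 / exp (g u) / g1 u"
    unfolding Fint_def
  proof (rule has_integral_le[OF integrable_integral[OF integrable_inverse_exp[OF assms]]
        has_integral_divide[OF has_integral_deriv_over_exp[OF assms]]])
    show "1 / exp (g s) \<le> g1 s / exp (g s) / g1 u" if "s \<in> {u..}" for s
      using monotone_onD[OF g1_mono, of u s] g1_pos[of u] that assms by (simp add: field_simps)
  qed
  then show ?thesis by (simp add: mult.commute)
qed

lemma Fint_split:
  assumes "0 \<le> u" "u \<le> w"
  shows "Fint g u = integral {u..w} (\<lambda>s. 1 / exp (g s)) + Fint g w"
proof -
  have "((\<lambda>s. 1 / exp (g s)) has_integral integral {u..w} (\<lambda>s. 1 / exp (g s)) + Fint g w) ({u..w} \<union> {w..})"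
    unfolding Fint_def
  proof (rule has_integral_Un)
    have "{u..w} \<inter> {w..} = {w}" using assms by auto
    then show "negligible ({u..w} \<inter> {w..})" by simp
  qed (use integrable_on_subinterval[OF integrable_inverse_exp[OF assms(1)]]
          integrable_inverse_exp assms in auto)
  moreover have "{u..w} \<union> {w..} = {u..}" using assms by auto
  ultimately show ?thesis unfolding Fint_def by (simp add: integral_unique)
qed

lemma Fint_strict_antimono: "strict_antimono_on {0..} (Fint g)"
proof (rule monotone_onI)
  fix u w :: real assume uw: "u \<in> {0..}" "w \<in> {0..}" "u < w"
  have "((\<lambda>s. 1 / exp (g w)) has_integral (w - u) / exp (g w)) {u..w}"
    using has_integral_const_real[of "1 / exp (g w)" u w] uw by simp
  moreover have "((\<lambda>s. 1 / exp (g s)) has_integral integral {u..w} (\<lambda>s. 1 / exp (g s))) {u..w}"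
    using integrable_on_subinterval[OF integrable_inverse_exp] uw by auto
  ultimately have "(w - u) / exp (g w) \<le> integral {u..w} (\<lambda>s. 1 / exp (g s))"
    by (rule has_integral_le) (use monotone_onD[OF g_mono] uw in \<open>auto intro!: divide_left_mono\<close>)
  moreover have "0 < (w - u) / exp (g w)" using uw by simp
  moreover have "Fint g u = integral {u..w} (\<lambda>s. 1 / exp (g s)) + Fint g w"
    using Fint_split uw by auto
  ultimately show "Fint g w < Fint g u" by linarith
qed

lemma Fint_pos:
  assumes "0 \<le> u"
  shows "0 < Fint g u"
proof -
  have "0 \<le> Fint g (u + 1)"
    unfolding Fint_def using integrable_inverse_exp assms by (intro integral_nonneg) auto
  also have "\<dots> < Fint g u"
    using monotone_onD[OF Fint_strict_antimono, of u "u + 1"] assms by simp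
  finally show ?thesis .
qed

lemma continuous_on_Fint: "continuous_on {0..b} (Fint g)"
proof -
  have "continuous_on {0..b} (\<lambda>u. Fint g 0 - integral {0..u} (\<lambda>s. 1 / exp (g s)))"
    using indefinite_integral_continuous_1[OF integrable_on_subinterval[OF integrable_inverse_exp]]
    by (intro continuous_intros) auto
  then show ?thesis
    by (rule continuous_on_cong[THEN iffD1, rotated 2]) (auto simp: Fint_split)
qed

lemma Fint_tendsto_0: "(Fint g \<longlongrightarrow> 0) at_top"
proof (rule tendsto_sandwich)
  show "\<forall>\<^sub>F u in at_top. 0 \<le> Fint g u"
    using eventually_ge_at_top[of 0] by eventually_elim (use Fint_pos in force)
  show "\<forall>\<^sub>F u in at_top. Fint g u \<le> 1 / (g1 0 * exp (g u))"
    using eventually_ge_at_top[of 0]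
  proof eventually_elim
    case (elim u)
    have "1 / (g1 u * exp (g u)) \<le> 1 / (g1 0 * exp (g u))"
      using monotone_onD[OF g1_mono, of 0 u] g1_pos[of 0] elim by (intro divide_left_mono) auto
    with Fint_le_inverse_deriv[OF elim] show ?case by linarith
  qed
  show "((\<lambda>u. 1 / (g1 0 * exp (g u))) \<longlongrightarrow> 0) at_top"
    using filterlim_compose[OF exp_at_top filterlim_g_at_top] g1_pos[OF order_refl]
    by (intro tendsto_divide_0[OF tendsto_const] filterlim_at_top_imp_at_infinity
        filterlim_tendsto_pos_mult_at_top[OF tendsto_const])
qed simp

lemma Fint_Finv:
  assumes "0 < y" "y \<le> Fint g 0"
  shows "0 \<le> Finv g y" "Fint g (Finv g y) = y"
proof -
  obtain b where b: "0 \<le> b" "Fint g b < y"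
    using eventually_conj[OF order_tendstoD(2)[OF Fint_tendsto_0 \<open>0 < y\<close>] eventually_ge_at_top[of 0]]
    by (auto simp: eventually_at_top_linorder)
  then obtain u where "0 \<le> u" "u \<le> b" "Fint g u = y"
    using IVT2'[of "Fint g" b y 0] continuous_on_Fint assms by auto
  then have y: "y \<in> Fint g ` {0..}" by auto
  have inj: "inj_on (Fint g) {0..}"
    using Fint_strict_antimono strict_antimono_iff_antimono by blast
  show "0 \<le> Finv g y"
    using the_inv_into_into[OF inj y, of "{0..}"] unfolding Finv_def by simp
  show "Fint g (Finv g y) = y"
    unfolding Finv_def by (rule f_the_inv_into_f[OF inj y])
qed

lemma f_deriv_at_eta_le:
  assumes y: "- ln (Fint g 0) \<le> y" and x: "4 * (exp x - 1) = hfun g g1 y"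
  shows "g1 (eta g y) * exp (g (eta g y)) \<le> exp (y - x)"
proof -
  define v where "v = eta g y"
  define P where "P = g1 v * exp (g v)"
  define E where "E = exp x"
  have "exp (- y) \<le> exp (ln (Fint g 0))"
    using y by simp
  then have "exp (- y) \<le> Fint g 0"
    using Fint_pos[of 0] by simp
  then have v: "0 \<le> v" "Fint g v = exp (- y)"
    using Fint_Finv unfolding v_def eta_def by auto
  have "P * exp (- y) \<le> 1"
    using Fint_le_inverse_deriv[OF v(1)] g1_pos[OF v(1)] unfolding v(2) P_def
    by (simp add: field_simps)
  moreover have h: "4 * (E - 1) = 1 - P * exp (- y)"
    using x unfolding hfun_def v_def[symmetric] P_def v(2) E_def by simp
  ultimately have "1 \<le> E" by argo
  have "P = (5 - 4 * E) * exp y"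
    using h by (simp add: exp_minus field_simps)
  also have "\<dots> \<le> exp y / E"
  proof -
    have "(5 - 4 * E) * E \<le> 1"
      using mult_nonneg_nonneg[of "4 * E - 1" "E - 1"] \<open>1 \<le> E\<close> by (simp add: algebra_simps)
    then have "5 - 4 * E \<le> 1 / E"
      using \<open>1 \<le> E\<close> by (simp add: field_simps)
    then have "(5 - 4 * E) * exp y \<le> 1 / E * exp y"
      by (rule mult_right_mono) simp
    then show ?thesis by simp
  qed
  finally show ?thesis unfolding P_def v_def E_def by (simp add: exp_diff)
qed

end

theorem lemma3p6:
  fixes g g1 g2 g3 :: "real \<Rightarrow> real" and x :: "real \<Rightarrow> real" and x1 x2 :: "real \<Rightarrow> real"
    and t0 :: real
  assumes dg: "\<And>u. u \<ge> 0 \<Longrightarrow> (g has_real_derivative g1 u) (at u within {0..})"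
    and dg1: "\<And>u. u \<ge> 0 \<Longrightarrow> (g1 has_real_derivative g2 u) (at u within {0..})"
    and dg2: "\<And>u. u \<ge> 0 \<Longrightarrow> (g2 has_real_derivative g3 u) (at u within {0..})"
    and cg3: "continuous_on {0..} g3"
    and g1pos: "\<And>u. u \<ge> 0 \<Longrightarrow> g1 u > 0"
    and g2pos: "\<And>u. u \<ge> 0 \<Longrightarrow> g2 u > 0"
    and c1: "\<And>u. u \<ge> 0 \<Longrightarrow> (g1 u)\<^sup>2 - g2 u \<ge> 0"
    and c2: "\<And>u. u \<ge> 0 \<Longrightarrow> 2 * (g2 u)\<^sup>2 - g1 u * g3 u > 0"
    and dx: "\<And>t. t \<ge> t0 \<Longrightarrow> (x has_real_derivative x1 t) (at t within {t0..})"
    and dx1: "\<And>t. t \<ge> t0 \<Longrightarrow> (x1 has_real_derivative x2 t) (at t within {t0..})"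
    and cx2: "continuous_on {t0..} x2"
    and xeq: "\<And>t. t \<ge> t0 \<Longrightarrow> 4 * (exp (x t) - 1) = hfun g g1 (x t + 2 * t + ln 16)"
    and xinit: "x t0 + 2 * t0 + ln 16 = - ln (Fint g 0)"
    and xbdd: "eventually (\<lambda>t. \<bar>x t\<bar> \<le> 1) at_top"
    and ximono: "strict_mono_on {t0..} (\<lambda>t. x t + 2 * t + ln 16)"
    and xuniq: "\<And>t y. t \<ge> t0 \<Longrightarrow> y + 2 * t + ln 16 \<ge> - ln (Fint g 0) \<Longrightarrow>
                  4 * (exp y - 1) = hfun g g1 (y + 2 * t + ln 16) \<Longrightarrow> y = x t"
  shows "\<forall>r. 0 < r \<and> r \<le> exp (- t0) \<longrightarrow>
           (let v = Finv g (r\<^sup>2 / 16 * exp (- x (- ln r)))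
            in g1 v * exp (g v) \<le> 16 / r\<^sup>2)"
proof (intro allI impI)
  fix r :: real assume r: "0 < r \<and> r \<le> exp (- t0)"
  interpret convex_exponent g g1
    using dg g1pos mono_on_atLeast_if_deriv_nonneg[OF dg1 less_imp_le[OF g2pos]]
    by unfold_locales auto
  define t where "t = - ln r"
  define \<xi> where "\<xi> = x t + 2 * t + ln 16"
  have "t0 \<le> t"
    using r ln_exp[of "- t0"] ln_le_cancel_iff[of r "exp (- t0)"] unfolding t_def by simp
  then have "- ln (Fint g 0) \<le> \<xi>"
    using strict_mono_on_leD[OF ximono, of t0 t] xinit unfolding \<xi>_def by simp
  have "exp t = 1 / r"
    using r unfolding t_def by (simp add: exp_minus inverse_eq_divide)
  then have "exp (2 * t) = 1 / r\<^sup>2"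
    using exp_add[of t t] by (simp add: power2_eq_square)
  moreover have "exp \<xi> = exp (x t) * exp (2 * t) * 16"
    unfolding \<xi>_def by (simp add: exp_add)
  ultimately have "exp (\<xi> - x t) = 16 / r\<^sup>2" "exp (- \<xi>) = r\<^sup>2 / 16 * exp (- x (- ln r))"
    unfolding t_def[symmetric] by (simp_all add: exp_diff exp_minus inverse_eq_divide)
  moreover have "g1 (eta g \<xi>) * exp (g (eta g \<xi>)) \<le> exp (\<xi> - x t)"
    using f_deriv_at_eta_le[OF \<open>- ln (Fint g 0) \<le> \<xi>\<close> xeq[OF \<open>t0 \<le> t\<close>, folded \<xi>_def]] .
  ultimately show "let v = Finv g (r\<^sup>2 / 16 * exp (- x (- ln r))) in g1 v * exp (g v) \<le> 16 / r\<^sup>2"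
    unfolding eta_def Let_def by (simp only:)
qed

end
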